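(* For a ring $R$, the following are equivalent: (1) $R$ is a DT ring; (2) $R$ is a semi-tripotent ring; (3) for each $a\in R$ there exist idempotents $e,f\in R$ with $ef=fe$ and $j\in J(R)$ such that $a=e+f+j$; (4) for each $a\in R$ there exist idempotents $e,f\in R$ with $ef=fe$ and $j\in J(R)$ such that $a=e-f+j$; (5) for each $a\in R$ there exist idempotents $e,f\in R$ with $ef=0=fe$ and $j\in J(R)$ such that $a=e-f+j$.
   Context: All rings are associative with identity. $J(R)$ is the Jacobson radical, $U(R)$ the group of units. $\Delta(R)=\{x\in R: x+u\in U(R)\text{ for all }u\in U(R)\}$. $\mathrm{Tr}(R)=\{x\in R: x^3=x\}$. A ring $R$ is a DT ring if every $r\in R$ can be written $r=e+d$ with $e\in\mathrm{Tr}(R)$ and $d\in\Delta(R)$. A ring $R$ is semi-tripotent if every $r\in R$ can be written $r=e+j$ with $e\in\mathrm{Tr}(R)$ and $j\in J(R)$. *)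

theory Defs
  imports Main
begin

definition units :: "'a::ring_1 set" where
  "units = {u. \<exists>v. u * v = 1 \<and> v * u = 1}"

definition left_ideal :: "'a::ring_1 set \<Rightarrow> bool" where
  "left_ideal I \<longleftrightarrow> 0 \<in> I \<and> (\<forall>x\<in>I. \<forall>y\<in>I. x + y \<in> I) \<and> (\<forall>x\<in>I. - x \<in> I)
     \<and> (\<forall>r. \<forall>x\<in>I. r * x \<in> I)"

definition maximal_left_ideal :: "'a::ring_1 set \<Rightarrow> bool" where
  "maximal_left_ideal M \<longleftrightarrow> left_ideal M \<and> M \<noteq> UNIV
     \<and> (\<forall>I. left_ideal I \<and> M \<subseteq> I \<and> I \<noteq> UNIV \<longrightarrow> I = M)"

definition jacobson :: "'a::ring_1 set" where
  "jacobson = \<Inter> {M. maximal_left_ideal M}"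

definition Delta :: "'a::ring_1 set" where
  "Delta = {x. \<forall>u\<in>units. x + u \<in> units}"

definition tripotents :: "'a::ring_1 set" where
  "tripotents = {x. x ^ 3 = x}"

definition DT_ring :: "'a::ring_1 itself \<Rightarrow> bool" where
  "DT_ring _ \<longleftrightarrow> (\<forall>r::'a. \<exists>e\<in>tripotents. \<exists>d\<in>Delta. r = e + d)"

definition semi_tripotent :: "'a::ring_1 itself \<Rightarrow> bool" where
  "semi_tripotent _ \<longleftrightarrow> (\<forall>r::'a. \<exists>e\<in>tripotents. \<exists>j\<in>jacobson. r = e + j)"

definition idempotent :: "'a::ring_1 \<Rightarrow> bool" where
  "idempotent e \<longleftrightarrow> e * e = e"

end

(* J(R) is always contained in Delta(R), so semi-tripotent rings are DT rings.  Conversely,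
   Delta(R) is closed under sums and products and under left multiplication by units and by
   idempotents, hence by tripotents t = (t + 1 - t^2) - (1 - t^2).  In a DT ring this gives
   R d <= Delta(R) for every d in Delta(R), so all 1 + r d are units and d lies in J(R).

   In a semi-tripotent ring write a = t + j with t^3 = t.  Then 3 (t^2 - t) lies in J(R), which
   makes E = 2 t^2 - t and F = 2 t^2 - 2 t orthogonal idempotents modulo J(R) with E - F = t.
   Idempotents lift modulo J(R) (to squares of tripotents) and the lifts can be made orthogonal.
   Conversely e - f is tripotent for commuting idempotents e, f, and e + f = e - (1 - f) + 1
   passes between sums and differences. *)

theory Submission
  imports Defs
begin

lemma unitsI: "u * v = 1 \<Longrightarrow> v * u = 1 \<Longrightarrow> u \<in> units"
  unfolding units_def by blast

lemma unitsE:
  assumes "u \<in> units"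
  obtains v where "u * v = 1" "v * u = 1"
  using assms unfolding units_def by blast

lemma one_in_units: "1 \<in> units"
  by (rule unitsI[of 1 1]) simp_all

lemma units_mult:
  assumes "u \<in> units" "w \<in> units"
  shows "u * w \<in> units"
proof -
  obtain u' where u: "u * u' = 1" "u' * u = 1" using assms(1) by (rule unitsE)
  obtain w' where w: "w * w' = 1" "w' * w = 1" using assms(2) by (rule unitsE)
  show ?thesis
    by (rule unitsI[of _ "w' * u'"]) (metis mult.assoc mult_1_left u w)+
qed

lemma units_uminus: "u \<in> units \<Longrightarrow> - u \<in> units"
  by (metis minus_mult_minus unitsE unitsI)

lemma units_if_left_right_inverse:
  assumes "l * u = 1" "u * r = 1"
  shows "u \<in> units"
proof -
  have "l = r"
    by (metis assms mult.assoc mult_1_left mult_1_right)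
  then show ?thesis
    using assms by (blast intro: unitsI)
qed

lemma one_minus_units_if_square_zero: "p * p = 0 \<Longrightarrow> 1 - p \<in> units"
  by (rule unitsI[of _ "1 + p"]) (simp_all add: algebra_simps)

text \<open>Jacobson's lemma: if \<open>w\<close> inverts \<open>1 + a b\<close>, then \<open>1 - b w a\<close> inverts \<open>1 + b a\<close>.\<close>
lemma one_plus_mult_units_commute:
  fixes a b :: "'a::ring_1"
  assumes "1 + a * b \<in> units"
  shows "1 + b * a \<in> units"
proof -
  obtain w where w: "(1 + a * b) * w = 1" "w * (1 + a * b) = 1"
    using assms by (rule unitsE)
  have "(1 + b * a) * (1 - b * w * a) = 1 + b * a - b * ((1 + a * b) * w) * a"
    by (simp add: algebra_simps)
  moreover have "(1 - b * w * a) * (1 + b * a) = 1 + b * a - b * (w * (1 + a * b)) * a"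
    by (simp add: algebra_simps)
  ultimately show ?thesis
    using w by (intro unitsI[of _ "1 - b * w * a"]) simp_all
qed

lemma left_ideal_proper_iff: "left_ideal I \<Longrightarrow> I \<noteq> UNIV \<longleftrightarrow> 1 \<notin> I"
  unfolding left_ideal_def by (metis UNIV_I UNIV_eq_I mult.right_neutral)

lemma left_ideal_Union_chain:
  assumes "C \<noteq> {}" and ideals: "\<And>I. I \<in> C \<Longrightarrow> left_ideal I"
    and chain: "\<And>I I'. I \<in> C \<Longrightarrow> I' \<in> C \<Longrightarrow> I \<subseteq> I' \<or> I' \<subseteq> I"
  shows "left_ideal (\<Union>C)"
  unfolding left_ideal_def
proof (intro conjI ballI allI)
  show "0 \<in> \<Union>C"
    using \<open>C \<noteq> {}\<close> ideals unfolding left_ideal_def by blast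
  fix x y assume "x \<in> \<Union>C" "y \<in> \<Union>C"
  then obtain I I' where "I \<in> C" "I' \<in> C" "x \<in> I" "y \<in> I'" by blast
  with chain[of I I'] ideals show "x + y \<in> \<Union>C"
    unfolding left_ideal_def by blast
next
  fix r x assume "x \<in> \<Union>C"
  with ideals show "- x \<in> \<Union>C" and "r * x \<in> \<Union>C"
    unfolding left_ideal_def by blast+
qed

lemma maximal_left_ideal_containing:
  assumes "left_ideal L" "1 \<notin> L"
  obtains M where "maximal_left_ideal M" "L \<subseteq> M"
proof -
  define A where "A = {I. left_ideal I \<and> L \<subseteq> I \<and> 1 \<notin> I}"
  have "\<exists>M\<in>A. \<forall>I\<in>A. M \<subseteq> I \<longrightarrow> I = M"
  proof (rule subset_Zorn_nonempty)
    show "A \<noteq> {}"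
      using assms unfolding A_def by blast
    fix C assume "C \<noteq> {}" "subset.chain A C"
    then show "\<Union>C \<in> A"
      unfolding A_def subset.chain_def
      by (auto intro!: left_ideal_Union_chain)
  qed
  then obtain M where "M \<in> A" and max: "\<And>I. I \<in> A \<Longrightarrow> M \<subseteq> I \<Longrightarrow> I = M"
    by blast
  then have "maximal_left_ideal M"
    unfolding maximal_left_ideal_def A_def using left_ideal_proper_iff by blast
  with \<open>M \<in> A\<close> show ?thesis
    unfolding A_def using that by blast
qed

lemma left_ideal_add_principal:
  assumes M: "left_ideal M"
  shows "left_ideal {m + r * x | m r. m \<in> M}" (is "left_ideal ?I")
proof -
  have mem: "m + r * x \<in> ?I" if "m \<in> M" for m r
    using that by blast
  show ?thesis
    unfolding left_ideal_def
  proof (intro conjI ballI allI)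
    show "0 \<in> ?I"
      using mem[of 0 0] M by (simp add: left_ideal_def)
  next
    fix y z assume "y \<in> ?I" "z \<in> ?I"
    then obtain m r m' r' where "y = m + r * x" "z = m' + r' * x" "m \<in> M" "m' \<in> M"
      by blast
    then show "y + z \<in> ?I"
      using mem[of "m + m'" "r + r'"] M by (simp add: left_ideal_def algebra_simps)
  next
    fix y assume "y \<in> ?I"
    then obtain m r where "y = m + r * x" "m \<in> M"
      by blast
    then show "- y \<in> ?I"
      using mem[of "- m" "- r"] M by (simp add: left_ideal_def algebra_simps)
  next
    fix s y assume "y \<in> ?I"
    then obtain m r where "y = m + r * x" "m \<in> M"
      by blast
    then show "s * y \<in> ?I"
      using mem[of "s * m" "s * r"] M by (simp add: left_ideal_def algebra_simps)
  qed
qed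

lemma left_ideal_principal: "left_ideal {r * x | r. True}"
proof -
  have "left_ideal {0}"
    by (simp add: left_ideal_def)
  moreover have "{m + r * x | m r. m \<in> {0}} = {r * x | r. True}"
    by auto
  ultimately show ?thesis
    using left_ideal_add_principal[of "{0}" x] by simp
qed

lemma left_ideal_Inter: "(\<And>I. I \<in> S \<Longrightarrow> left_ideal I) \<Longrightarrow> left_ideal (\<Inter>S)"
  unfolding left_ideal_def by (simp add: Inter_iff)

lemma left_ideal_jacobson: "left_ideal jacobson"
  unfolding jacobson_def maximal_left_ideal_def by (rule left_ideal_Inter) blast

lemma jacobson_if_one_plus_mult_units:
  fixes x :: "'a::ring_1"
  assumes units: "\<And>r. 1 + r * x \<in> units"
  shows "x \<in> jacobson"
  unfolding jacobson_def
proof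
  fix M :: "'a set" assume "M \<in> {M. maximal_left_ideal M}"
  then have M: "left_ideal M" "1 \<notin> M"
    and max: "\<And>I. left_ideal I \<Longrightarrow> M \<subseteq> I \<Longrightarrow> 1 \<notin> I \<Longrightarrow> I = M"
    unfolding maximal_left_ideal_def using left_ideal_proper_iff by blast+
  define I where "I = {m + r * x | m r. m \<in> M}"
  have "left_ideal I"
    unfolding I_def using M(1) by (rule left_ideal_add_principal)
  have "M \<subseteq> I"
  proof
    fix m assume "m \<in> M"
    then have "m + 0 * x \<in> I"
      unfolding I_def by blast
    then show "m \<in> I"
      by simp
  qed
  have "0 + 1 * x \<in> I"
    using M(1) unfolding I_def left_ideal_def by blast
  then have "x \<in> I"
    by simp
  show "x \<in> M"
  proof (rule ccontr)
    assume "x \<notin> M"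
    with max \<open>left_ideal I\<close> \<open>M \<subseteq> I\<close> \<open>x \<in> I\<close> have "1 \<in> I"
      by blast
    then obtain m r where "1 = m + r * x" "m \<in> M"
      unfolding I_def by blast
    then have "m = 1 + (- r) * x" "m \<in> M"
      by (simp_all add: algebra_simps)
    moreover obtain v where "v * m = 1"
      using units calculation(1) by (metis unitsE)
    ultimately have "1 \<in> M"
      using M(1) unfolding left_ideal_def by metis
    with M(2) show False
      by simp
  qed
qed

lemma one_plus_mult_jacobson_left_invertible:
  assumes "x \<in> jacobson"
  shows "\<exists>s. s * (1 + r * x) = 1"
proof (rule ccontr)
  assume no_inverse: "\<nexists>s. s * (1 + r * x) = 1"
  define L where "L = {s * (1 + r * x) | s. True}"
  have "left_ideal L" "1 \<notin> L"
    unfolding L_def using left_ideal_principal no_inverse by auto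
  then obtain M where M: "maximal_left_ideal M" "L \<subseteq> M"
    by (rule maximal_left_ideal_containing)
  then have "left_ideal M" "1 \<notin> M"
    unfolding maximal_left_ideal_def using left_ideal_proper_iff by blast+
  have "x \<in> M"
    using assms M(1) unfolding jacobson_def by blast
  moreover have "1 + r * x \<in> M"
    using M(2) unfolding L_def by (metis (mono_tags, lifting) mem_Collect_eq mult_1 subsetD)
  ultimately have "1 + r * x + - (r * x) \<in> M"
    using \<open>left_ideal M\<close> unfolding left_ideal_def by blast
  with \<open>1 \<notin> M\<close> show False by simp
qed

text \<open>The left inverse \<open>s = 1 - (s r) x\<close> of \<open>1 + r x\<close> has a left inverse itself, so it is a unit.\<close>
lemma one_plus_mult_jacobson_units:
  assumes "x \<in> jacobson"
  shows "1 + r * x \<in> units"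
proof -
  obtain s where s: "s * (1 + r * x) = 1"
    using assms one_plus_mult_jacobson_left_invertible by blast
  then have "s = 1 + (- (s * r)) * x"
    by (simp add: distrib_left mult.assoc eq_diff_eq)
  then obtain t where t: "t * s = 1"
    using assms one_plus_mult_jacobson_left_invertible by metis
  have "t = (t * s) * (1 + r * x)"
    using s by (simp add: mult.assoc)
  with t have "(1 + r * x) * s = 1"
    by simp
  with s show ?thesis
    by (rule unitsI[rotated])
qed

lemma jacobson_zero: "0 \<in> jacobson"
  and jacobson_add: "x \<in> jacobson \<Longrightarrow> y \<in> jacobson \<Longrightarrow> x + y \<in> jacobson"
  and jacobson_uminus: "x \<in> jacobson \<Longrightarrow> - x \<in> jacobson"
  and jacobson_mult_left: "x \<in> jacobson \<Longrightarrow> r * x \<in> jacobson"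
  using left_ideal_jacobson unfolding left_ideal_def by blast+

lemma jacobson_diff: "x \<in> jacobson \<Longrightarrow> y \<in> jacobson \<Longrightarrow> x - y \<in> jacobson"
  by (metis diff_conv_add_uminus jacobson_add jacobson_uminus)

lemma jacobson_mult_right:
  assumes "x \<in> jacobson"
  shows "x * r \<in> jacobson"
proof (rule jacobson_if_one_plus_mult_units)
  fix s
  have "1 + r * (s * x) \<in> units"
    using assms by (simp add: one_plus_mult_jacobson_units flip: mult.assoc)
  then show "1 + s * (x * r) \<in> units"
    by (metis one_plus_mult_units_commute mult.assoc)
qed

lemma jacobson_mult_cong:
  assumes "x - x' \<in> jacobson" "y - y' \<in> jacobson"
  shows "x * y - x' * y' \<in> jacobson"
proof -
  have "(x - x') * y + x' * (y - y') \<in> jacobson"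
    using assms by (intro jacobson_add jacobson_mult_left jacobson_mult_right)
  moreover have "x * y - x' * y' = (x - x') * y + x' * (y - y')"
    by (simp add: algebra_simps)
  ultimately show ?thesis
    by simp
qed

text \<open>Since \<open>d + u = u (1 + u\<inverse> d)\<close>, membership in \<open>\<Delta>(R)\<close> can be tested on \<open>1 + u d\<close>.\<close>
lemma mem_Delta_iff: "(d::'a::ring_1) \<in> Delta \<longleftrightarrow> (\<forall>u\<in>units. 1 + u * d \<in> units)"
proof safe
  fix u :: 'a assume "d \<in> Delta" "u \<in> units"
  from \<open>u \<in> units\<close> obtain v where v: "u * v = 1" "v * u = 1"
    by (rule unitsE)
  then have "v \<in> units"
    by (rule unitsI[rotated])
  with \<open>d \<in> Delta\<close> have "u * (d + v) \<in> units"
    using \<open>u \<in> units\<close> units_mult unfolding Delta_def by blast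
  then show "1 + u * d \<in> units"
    by (simp add: v distrib_left add.commute)
next
  assume H: "\<forall>u\<in>units. 1 + u * d \<in> units"
  show "d \<in> Delta"
    unfolding Delta_def
  proof (intro CollectI ballI)
    fix u :: 'a assume "u \<in> units"
    then obtain v where v: "u * v = 1" "v * u = 1"
      by (rule unitsE)
    then have "v \<in> units"
      by (rule unitsI[rotated])
    with H have "u * (1 + v * d) \<in> units"
      using \<open>u \<in> units\<close> units_mult by blast
    then show "d + u \<in> units"
      by (simp add: v distrib_left add.commute flip: mult.assoc)
  qed
qed

lemma one_plus_Delta_units: "d \<in> Delta \<Longrightarrow> 1 + d \<in> units"
  using mem_Delta_iff one_in_units by fastforce

lemma Delta_add: "x \<in> Delta \<Longrightarrow> y \<in> Delta \<Longrightarrow> x + y \<in> Delta"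
  unfolding Delta_def by (simp add: add.assoc)

lemma Delta_uminus:
  fixes x :: "'a::ring_1"
  assumes "x \<in> Delta"
  shows "- x \<in> Delta"
  unfolding Delta_def
proof (intro CollectI ballI)
  fix u :: 'a assume "u \<in> units"
  then have "x + - u \<in> units"
    using assms units_uminus unfolding Delta_def by blast
  then have "- (x + - u) \<in> units"
    by (rule units_uminus)
  then show "- x + u \<in> units"
    by (simp only: minus_add_distrib minus_minus)
qed

lemma Delta_diff: "x \<in> Delta \<Longrightarrow> y \<in> Delta \<Longrightarrow> x - y \<in> Delta"
  by (metis Delta_add Delta_uminus diff_conv_add_uminus)

lemma Delta_mult_left_unit: "u \<in> units \<Longrightarrow> d \<in> Delta \<Longrightarrow> u * d \<in> Delta"
  unfolding mem_Delta_iff by (metis mult.assoc units_mult)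

text \<open>\<open>1 + c b = (1 + c) (1 + b) - (c + b)\<close>.\<close>
lemma one_plus_mult_Delta_units:
  assumes "c \<in> Delta" "b \<in> Delta"
  shows "1 + c * b \<in> units"
proof -
  have "- (c + b) \<in> Delta" "(1 + c) * (1 + b) \<in> units"
    using Delta_uminus[OF Delta_add[OF assms]] assms by (simp_all add: one_plus_Delta_units units_mult)
  then have "- (c + b) + (1 + c) * (1 + b) \<in> units"
    unfolding Delta_def by blast
  then show ?thesis
    by (simp add: algebra_simps)
qed

lemma Delta_mult: "a \<in> Delta \<Longrightarrow> b \<in> Delta \<Longrightarrow> a * b \<in> Delta"
  unfolding mem_Delta_iff[of "a * b"]
  by (metis Delta_mult_left_unit mult.assoc one_plus_mult_Delta_units)

lemma jacobson_subset_Delta: "x \<in> jacobson \<Longrightarrow> x \<in> Delta"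
  by (simp add: mem_Delta_iff one_plus_mult_jacobson_units)

lemma units_if_invertible_in_corner:
  assumes e: "idempotent e" and a: "e * a = a" "a * e = a"
    and inverses: "a * b = e" "c * a = e"
  shows "a + (1 - e) \<in> units"
proof (rule units_if_left_right_inverse)
  have ee: "e * e = e"
    using e unfolding idempotent_def .
  have assoc: "e * (e * z) = e * z" "a * (e * z) = a * z" "a * (b * z) = e * z" "c * (a * z) = e * z"
    for z
    using ee a inverses by (simp_all flip: mult.assoc)
  show "(e * c * e + (1 - e)) * (a + (1 - e)) = 1"
    using ee a inverses by (simp add: algebra_simps mult.assoc assoc)
  show "(a + (1 - e)) * (e * b * e + (1 - e)) = 1"
    using ee a inverses by (simp add: algebra_simps mult.assoc assoc)
qed

text \<open>\<open>e + e d e\<close> equals \<open>e X\<close> and \<open>X' e\<close> for the units \<open>X = d + (1 - e d (1 - e))\<close> and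
  \<open>X' = d + (1 - (1 - e) d e)\<close>, so it is invertible in the corner \<open>e R e\<close>; Jacobson's lemma
  then moves the right factor \<open>e\<close> of \<open>1 + e d e\<close> to the left.\<close>
lemma one_plus_idempotent_mult_Delta_units:
  fixes e d :: "'a::ring_1"
  assumes e: "idempotent e" and d: "d \<in> Delta"
  shows "1 + e * d \<in> units"
proof -
  have ee: "e * e = e" "e * (e * z) = e * z" for z
    using e unfolding idempotent_def by (simp_all flip: mult.assoc)
  have orth: "e * (1 - e) = 0" "(1 - e) * e = 0"
    using ee by (simp_all add: algebra_simps)
  define p where "p = e * d * (1 - e)"
  define q where "q = (1 - e) * d * e"
  have "p * p = e * d * ((1 - e) * e) * d * (1 - e)" "q * q = (1 - e) * d * (e * (1 - e)) * d * e"
    unfolding p_def q_def by (simp_all only: mult.assoc)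
  then have "p * p = 0" "q * q = 0"
    by (simp_all add: orth)
  then have "d + (1 - p) \<in> units" "d + (1 - q) \<in> units"
    using d one_minus_units_if_square_zero unfolding Delta_def by blast+
  then obtain Y Y' where Y: "(d + (1 - p)) * Y = 1" and Y': "Y' * (d + (1 - q)) = 1"
    by (meson unitsE)
  define a where "a = e + e * d * e"
  have a_eq: "e * (d + (1 - p)) = a" "(d + (1 - q)) * e = a"
    unfolding a_def p_def q_def by (simp_all add: algebra_simps mult.assoc ee)
  have "e * a = a" "a * e = a"
    unfolding a_def by (simp_all add: algebra_simps mult.assoc ee)
  moreover have "a * (Y * e) = e"
    by (metis Y a_eq(1) ee(1) mult.assoc mult_1_left)
  moreover have "(e * Y') * a = e"
    by (metis Y' a_eq(2) ee(1) mult.assoc mult_1_left)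
  ultimately have "a + (1 - e) \<in> units"
    using e by (blast intro: units_if_invertible_in_corner)
  then have "1 + (e * d) * e \<in> units"
    by (simp add: a_def algebra_simps)
  then show ?thesis
    using one_plus_mult_units_commute ee(2) by metis
qed

lemma Delta_mult_left_idempotent:
  fixes e d :: "'a::ring_1"
  assumes e: "idempotent e" and d: "d \<in> Delta"
  shows "e * d \<in> Delta"
  unfolding mem_Delta_iff
proof
  fix u :: 'a assume "u \<in> units"
  then obtain v where v: "u * v = 1" "v * u = 1"
    by (rule unitsE)
  have uv: "u * (v * z) = z" "v * (u * z) = z" for z
    using v by (simp_all flip: mult.assoc)
  have "idempotent (u * e * v)"
    using e unfolding idempotent_def by (simp add: mult.assoc uv flip: mult.assoc[of e e])
  moreover have "u * d \<in> Delta"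
    using \<open>u \<in> units\<close> d by (rule Delta_mult_left_unit)
  ultimately have "1 + (u * e * v) * (u * d) \<in> units"
    by (rule one_plus_idempotent_mult_Delta_units)
  then show "1 + u * (e * d) \<in> units"
    by (simp add: mult.assoc uv)
qed

text \<open>A tripotent \<open>t\<close> is the difference of the involution \<open>t + (1 - t\<^sup>2)\<close> and the idempotent \<open>1 - t\<^sup>2\<close>.\<close>
lemma Delta_mult_left_tripotent:
  fixes t d :: "'a::ring_1"
  assumes t: "t ^ 3 = t" and d: "d \<in> Delta"
  shows "t * d \<in> Delta"
proof -
  have t3: "t * (t * t) = t" "t * (t * (t * z)) = t * z" for z
    using t by (simp_all add: power3_eq_cube flip: mult.assoc)
  define w where "w = t + (1 - t * t)"
  define g where "g = 1 - t * t"
  have "w * w = 1"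
    unfolding w_def by (simp add: algebra_simps mult.assoc t3)
  then have "w * d \<in> Delta"
    using d by (blast intro: unitsI Delta_mult_left_unit)
  moreover have "g * d \<in> Delta"
    unfolding g_def using d
    by (intro Delta_mult_left_idempotent) (simp add: idempotent_def algebra_simps mult.assoc t3)
  moreover have "t * d = w * d - g * d"
    unfolding w_def g_def by (simp add: algebra_simps)
  ultimately show ?thesis
    by (simp add: Delta_diff)
qed

lemma DT_ring_Delta_subset_jacobson:
  assumes "DT_ring (R::'a::ring_1 itself)" "(d::'a) \<in> Delta"
  shows "d \<in> jacobson"
proof (rule jacobson_if_one_plus_mult_units)
  fix s :: 'a
  obtain t d' where "t ^ 3 = t" "d' \<in> Delta" "s = t + d'"
    using assms(1) unfolding DT_ring_def tripotents_def by blast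
  then have "t * d + d' * d \<in> Delta"
    using assms(2) by (intro Delta_add Delta_mult Delta_mult_left_tripotent)
  then have "s * d \<in> Delta"
    by (simp add: \<open>s = t + d'\<close> distrib_right)
  then show "1 + s * d \<in> units"
    by (rule one_plus_Delta_units)
qed

lemma DT_ring_iff_semi_tripotent: "DT_ring R \<longleftrightarrow> semi_tripotent R"
proof
  assume "DT_ring R"
  then show "semi_tripotent R"
    using DT_ring_Delta_subset_jacobson unfolding DT_ring_def semi_tripotent_def by metis
next
  assume "semi_tripotent R"
  then show "DT_ring R"
    using jacobson_subset_Delta unfolding DT_ring_def semi_tripotent_def by metis
qed

lemma semi_tripotent_cube_diff:
  assumes "semi_tripotent (R::'a::ring_1 itself)"
  shows "(x::'a) ^ 3 - x \<in> jacobson"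
proof -
  obtain t j where t: "t ^ 3 = t" and "j \<in> jacobson" "x = t + j"
    using assms unfolding semi_tripotent_def tripotents_def by blast
  then have xt: "x - t \<in> jacobson"
    by simp
  have "x * x * x - t * t * t - (x - t) \<in> jacobson"
    using jacobson_diff[OF jacobson_mult_cong[OF jacobson_mult_cong[OF xt xt] xt] xt] .
  moreover have "x * x * x - t * t * t - (x - t) = x ^ 3 - x"
    using t by (simp add: power3_eq_cube)
  ultimately show ?thesis
    by simp
qed

lemma three_mult_eq: "3 * (y::'a::ring_1) = y + y + y"
proof -
  have "(3::'a) = 1 + 1 + 1"
    by simp
  then show ?thesis
    by (simp only: distrib_right mult_1_left)
qed

lemma semi_tripotent_three_mult_square_diff:
  assumes "semi_tripotent (R::'a::ring_1 itself)"
  shows "3 * ((x::'a) * x - x) \<in> jacobson"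
proof -
  have "(x ^ 3 - x) - ((x - 1) ^ 3 - (x - 1)) \<in> jacobson"
    using assms by (intro jacobson_diff semi_tripotent_cube_diff)
  moreover have "(x ^ 3 - x) - ((x - 1) ^ 3 - (x - 1)) = 3 * (x * x - x)"
    unfolding three_mult_eq by (simp add: power3_eq_cube algebra_simps)
  ultimately show ?thesis
    by simp
qed

lemma semi_tripotent_lift_idempotent:
  assumes "semi_tripotent (R::'a::ring_1 itself)" and x: "(x::'a) * x - x \<in> jacobson"
  obtains e where "idempotent e" "e - x \<in> jacobson"
proof -
  obtain t j where t: "t ^ 3 = t" and "j \<in> jacobson" "x = t + j"
    using assms unfolding semi_tripotent_def tripotents_def by blast
  then have xt: "x - t \<in> jacobson"
    by simp
  have "idempotent (t * t)"
    using t unfolding idempotent_def by (simp add: power3_eq_cube mult.assoc)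
  moreover have "(x * x - x) - (x * x - t * t) \<in> jacobson"
    using jacobson_diff[OF x jacobson_mult_cong[OF xt xt]] .
  then have "t * t - x \<in> jacobson"
    by simp
  ultimately show ?thesis
    using that by blast
qed

text \<open>\<open>1 - h e h\<close> commutes with \<open>h\<close>, hence so does its inverse \<open>w\<close>, and
  \<open>h (1 - e) h = h (1 - h e h)\<close>.\<close>
lemma idempotent_orthogonalization:
  fixes e h w :: "'a::ring_1"
  assumes e: "idempotent e" and h: "idempotent h"
    and w: "(1 - h * e * h) * w = 1" "w * (1 - h * e * h) = 1"
  shows "idempotent ((1 - e) * h * w * h * (1 - e))"
proof -
  define k where "k = h * e * h"
  have hh: "h * h = h"
    using h unfolding idempotent_def .
  have hk: "h * k = k" "k * h = k"
    unfolding k_def by (simp_all add: hh mult.assoc flip: mult.assoc[of h h])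
  have comm: "h * (1 - k) = (1 - k) * h"
    by (simp add: algebra_simps hk)
  have hw: "w * h = h * w"
  proof -
    have "w * h = w * (h * (1 - k)) * w"
      using w unfolding k_def by (simp add: mult.assoc)
    also have "\<dots> = (w * (1 - k)) * h * w"
      by (simp only: comm mult.assoc)
    also have "\<dots> = h * w"
      using w unfolding k_def by simp
    finally show ?thesis .
  qed
  have middle: "h * (1 - e) * ((1 - e) * h) = h * (1 - k)"
  proof -
    have "(1 - e) * (1 - e) = 1 - e"
      using e unfolding idempotent_def by (simp add: algebra_simps)
    then have "h * (1 - e) * ((1 - e) * h) = h * (1 - e) * h"
      by (metis mult.assoc)
    also have "\<dots> = h - k"
      unfolding k_def by (simp add: algebra_simps hh)
    also have "\<dots> = h * (1 - k)"
      by (simp add: algebra_simps hk)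
    finally show ?thesis .
  qed
  have "(1 - e) * h * w * h * (1 - e) * ((1 - e) * h * w * h * (1 - e))
      = (1 - e) * h * (w * (h * (1 - e) * ((1 - e) * h)) * w) * h * (1 - e)"
    by (simp only: mult.assoc)
  also have "\<dots> = (1 - e) * h * (w * ((1 - k) * h) * w) * h * (1 - e)"
    by (simp only: middle comm)
  also have "\<dots> = (1 - e) * h * ((w * (1 - k)) * (h * w)) * h * (1 - e)"
    by (simp only: mult.assoc)
  also have "\<dots> = (1 - e) * (h * h) * w * h * (1 - e)"
    using w unfolding k_def by (simp add: mult.assoc)
  finally show ?thesis
    unfolding idempotent_def hh .
qed

lemma lift_orthogonal_idempotent:
  fixes e h :: "'a::ring_1"
  assumes e: "idempotent e" and h: "idempotent h" and J: "e * h \<in> jacobson" "h * e \<in> jacobson"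
  obtains f where "idempotent f" "e * f = 0" "f * e = 0" "f - h \<in> jacobson"
proof -
  have "h * e * h \<in> jacobson"
    using J(2) by (rule jacobson_mult_right)
  then have "1 + (- 1) * (h * e * h) \<in> units"
    by (rule one_plus_mult_jacobson_units)
  then obtain w where w: "(1 - h * e * h) * w = 1" "w * (1 - h * e * h) = 1"
    by (auto elim: unitsE)
  define f where "f = (1 - e) * h * w * h * (1 - e)"
  have orth: "e * (1 - e) = 0" "(1 - e) * e = 0"
    using e unfolding idempotent_def by (simp_all add: algebra_simps)
  have "idempotent f"
    unfolding f_def using e h w by (rule idempotent_orthogonalization)
  moreover have "e * f = (e * (1 - e)) * h * w * h * (1 - e)" "f * e = (1 - e) * h * w * h * ((1 - e) * e)"
    unfolding f_def by (simp_all only: mult.assoc)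
  then have "e * f = 0" "f * e = 0"
    by (simp_all add: orth)
  moreover have "f - h \<in> jacobson"
  proof -
    have "w - 1 = w * (h * e * h)"
      using w(2) by (simp add: algebra_simps)
    then have "w - 1 \<in> jacobson"
      using \<open>h * e * h \<in> jacobson\<close> by (simp add: jacobson_mult_left)
    then have "f - (1 - e) * h * 1 * h * (1 - e) \<in> jacobson"
      unfolding f_def by (intro jacobson_mult_cong) (simp_all add: jacobson_zero)
    moreover have "(1 - e) * h * 1 * h * (1 - e) = (1 - e) * (h * h) * (1 - e)"
      by (simp add: mult.assoc)
    moreover have "h * h = h"
      using h unfolding idempotent_def .
    moreover have "(1 - e) * h * (1 - e) - h = e * h * e - e * h - h * e"
      by (simp add: algebra_simps)
    moreover have "e * h * e - e * h - h * e \<in> jacobson"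
      using jacobson_diff[OF jacobson_diff[OF jacobson_mult_right[OF J(1)] J(1)] J(2)] .
    ultimately have "(f - (1 - e) * h * (1 - e)) + ((1 - e) * h * (1 - e) - h) \<in> jacobson"
      by (simp add: jacobson_add)
    then show ?thesis
      by simp
  qed
  ultimately show ?thesis
    using that by blast
qed

text \<open>Modulo \<open>J(R)\<close> the tripotent part \<open>t\<close> of \<open>a\<close> splits as \<open>E - F\<close> with \<open>E = 2t\<^sup>2 - t\<close> and
  \<open>F = 2t\<^sup>2 - 2t\<close>: all defects of \<open>E, F\<close> being orthogonal idempotents are multiples of
  \<open>3(t\<^sup>2 - t) \<in> J(R)\<close>.\<close>
lemma semi_tripotent_orthogonal_decomposition:
  assumes "semi_tripotent (R::'a::ring_1 itself)"
  obtains e f j where "idempotent e" "idempotent f" "e * f = 0" "f * e = 0" "j \<in> jacobson"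
    "(a::'a) = e - f + j"
proof -
  obtain t j where t: "t ^ 3 = t" and j: "j \<in> jacobson" "a = t + j"
    using assms unfolding semi_tripotent_def tripotents_def by blast
  have t3: "t * (t * t) = t"
    using t by (simp add: power3_eq_cube mult.assoc)
  define E where "E = t * t + t * t - t"
  define F where "F = t * t + t * t - t - t"
  define q where "q = 3 * (t * t - t)"
  have "q \<in> jacobson"
    unfolding q_def using assms by (rule semi_tripotent_three_mult_square_diff)
  then have q: "q \<in> jacobson" "q + q \<in> jacobson"
    by (simp_all add: jacobson_add)
  have "E * E - E = q" "F * F - F = q + q" "E * F = q + q" "F * E = q + q" "E - F = t"
    unfolding E_def F_def q_def three_mult_eq by (simp_all add: algebra_simps mult.assoc t3)
  then have EF: "E * E - E \<in> jacobson" "F * F - F \<in> jacobson" "E * F \<in> jacobson" "F * E \<in> jacobson"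
    and "E - F = t"
    using q by simp_all
  obtain e where e: "idempotent e" "e - E \<in> jacobson"
    using assms EF(1) by (rule semi_tripotent_lift_idempotent)
  obtain h where h: "idempotent h" "h - F \<in> jacobson"
    using assms EF(2) by (rule semi_tripotent_lift_idempotent)
  have "e * h - E * F \<in> jacobson" "h * e - F * E \<in> jacobson"
    using e(2) h(2) by (simp_all add: jacobson_mult_cong)
  then have eh: "e * h \<in> jacobson" "h * e \<in> jacobson"
    using EF(3,4) by (metis diff_add_cancel jacobson_add)+
  obtain f where f: "idempotent f" "e * f = 0" "f * e = 0" "f - h \<in> jacobson"
    using e(1) h(1) eh by (rule lift_orthogonal_idempotent)
  have "j - (e - E) + (f - h) + (h - F) \<in> jacobson"
    using jacobson_add[OF jacobson_add[OF jacobson_diff[OF j(1) e(2)] f(4)] h(2)] .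
  moreover have "a = e - f + (j - (e - E) + (f - h) + (h - F))"
    using j(2) \<open>E - F = t\<close> by (simp add: algebra_simps)
  ultimately show ?thesis
    using that e(1) f by blast
qed

lemma idempotent_one_minus: "idempotent f \<Longrightarrow> idempotent (1 - f)"
  unfolding idempotent_def by (simp add: algebra_simps)

lemma commuting_idempotents_diff_tripotent:
  fixes e f :: "'a::ring_1"
  assumes "idempotent e" "idempotent f" "e * f = f * e"
  shows "e - f \<in> tripotents"
proof -
  have "e * e = e" "f * f = f" "e * (f * z) = f * (e * z)" "e * (e * z) = e * z" "f * (f * z) = f * z"
    for z
    using assms unfolding idempotent_def by (simp_all flip: mult.assoc)
  then show ?thesis
    unfolding tripotents_def using assms(3) by (simp add: power3_eq_cube algebra_simps mult.assoc)
qed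

text \<open>Replacing \<open>f\<close> by \<open>1 - f\<close> turns \<open>e + f\<close> into \<open>e - f + 1\<close>.\<close>
lemma commuting_idempotents_sum_iff_diff:
  "(\<forall>a::'a::ring_1. \<exists>e f j. idempotent e \<and> idempotent f \<and> e * f = f * e \<and> j \<in> jacobson \<and> a = e + f + j)
    \<longleftrightarrow> (\<forall>a::'a. \<exists>e f j. idempotent e \<and> idempotent f \<and> e * f = f * e \<and> j \<in> jacobson \<and> a = e - f + j)"
proof (intro iffI allI)
  fix a :: 'a
  assume decomposable: "\<forall>a::'a. \<exists>e f j. idempotent e \<and> idempotent f \<and> e * f = f * e \<and> j \<in> jacobson
    \<and> a = e + f + j"
  obtain e f j where "idempotent e" "idempotent f" "e * f = f * e" "j \<in> jacobson"
    "a + 1 = e + f + j"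
    using decomposable[rule_format, of "a + 1"] by blast
  moreover have "idempotent (1 - f)" "e * (1 - f) = (1 - f) * e" "a = e - (1 - f) + j"
    using calculation idempotent_one_minus by (simp_all add: algebra_simps eq_diff_eq)
  ultimately show "\<exists>e f j. idempotent e \<and> idempotent f \<and> e * f = f * e \<and> j \<in> jacobson \<and> a = e - f + j"
    by blast
next
  fix a :: 'a
  assume decomposable: "\<forall>a::'a. \<exists>e f j. idempotent e \<and> idempotent f \<and> e * f = f * e \<and> j \<in> jacobson
    \<and> a = e - f + j"
  obtain e f j where "idempotent e" "idempotent f" "e * f = f * e" "j \<in> jacobson"
    "a - 1 = e - f + j"
    using decomposable[rule_format, of "a - 1"] by blast
  moreover have "idempotent (1 - f)" "e * (1 - f) = (1 - f) * e" "a = e + (1 - f) + j"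
    using calculation idempotent_one_minus by (simp_all add: algebra_simps eq_diff_eq)
  ultimately show "\<exists>e f j. idempotent e \<and> idempotent f \<and> e * f = f * e \<and> j \<in> jacobson \<and> a = e + f + j"
    by blast
qed

theorem theorem4p10:
  fixes R :: "'a::ring_1 itself"
  shows "(DT_ring R \<longleftrightarrow> semi_tripotent R)
   \<and> (semi_tripotent R \<longleftrightarrow> (\<forall>a::'a. \<exists>e f j. idempotent e \<and> idempotent f \<and> e * f = f * e
          \<and> j \<in> jacobson \<and> a = e + f + j))
   \<and> (semi_tripotent R \<longleftrightarrow> (\<forall>a::'a. \<exists>e f j. idempotent e \<and> idempotent f \<and> e * f = f * e
          \<and> j \<in> jacobson \<and> a = e - f + j))
   \<and> (semi_tripotent R \<longleftrightarrow> (\<forall>a::'a. \<exists>e f j. idempotent e \<and> idempotent f \<and> e * f = 0 \<and> f * e = 0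
          \<and> j \<in> jacobson \<and> a = e - f + j))"
proof -
  let ?sum = "\<forall>a::'a. \<exists>e f j. idempotent e \<and> idempotent f \<and> e * f = f * e \<and> j \<in> jacobson
    \<and> a = e + f + j"
  let ?diff = "\<forall>a::'a. \<exists>e f j. idempotent e \<and> idempotent f \<and> e * f = f * e \<and> j \<in> jacobson
    \<and> a = e - f + j"
  let ?orth = "\<forall>a::'a. \<exists>e f j. idempotent e \<and> idempotent f \<and> e * f = 0 \<and> f * e = 0
    \<and> j \<in> jacobson \<and> a = e - f + j"
  have "semi_tripotent R \<Longrightarrow> ?orth"
    using semi_tripotent_orthogonal_decomposition by metis
  moreover have "?orth \<Longrightarrow> ?diff"
    by fastforce
  moreover have "?diff \<Longrightarrow> semi_tripotent R"
    unfolding semi_tripotent_def using commuting_idempotents_diff_tripotent by metis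
  moreover have "?sum \<longleftrightarrow> ?diff"
    by (rule commuting_idempotents_sum_iff_diff)
  ultimately show ?thesis
    using DT_ring_iff_semi_tripotent by blast
qed

end
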